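(* Let $H=\{\underline z\in\mathbb{C}^3: z_1+z_2+z_3=0\}$ and $p(Z)=Z^3$. If $\underline z\in H$ is not a complex scalar multiple of a vector with real entries, then $W_p^{\circ n}(\underline z)$ is defined for all $n\ge0$ and converges to the zero vector; the convergence is linear with rate $2/3$, i.e. $W_p^{\circ n}(\underline z)\neq 0$ for all $n$ and $\|W_p^{\circ(n+1)}(\underline z)\|/\|W_p^{\circ n}(\underline z)\|\to 2/3$ (for any norm on $\mathbb{C}^3$).
   Context: For a monic polynomial $p\in\mathbb{C}[Z]$ of degree $d$, the Weierstrass map $W_p$ is the partially defined map $\mathbb{C}^d\setminus\Delta\to\mathbb{C}^d$, $\underline z\mapsto \underline z'$ with $z'_k=z_k-\dfrac{p(z_k)}{\prod_{j\ne k}(z_k-z_j)}$, where $\Delta=\{\underline z\in\mathbb{C}^d: z_j=z_k\text{ for some }j<k\}$. *)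

theory Defs
  imports "HOL-Analysis.Analysis" "HOL-Computational_Algebra.Polynomial"
begin

definition diag_set :: "(complex ^ 'n) set" where
  "diag_set = {z. \<exists>j k. j \<noteq> k \<and> z $ j = z $ k}"

text \<open>Weierstrass map of p (meaningful off diag_set; total in HOL via x / 0 = 0).\<close>
definition weierstrass_map :: "complex poly \<Rightarrow> complex ^ 'n \<Rightarrow> complex ^ 'n" where
  "weierstrass_map p z =
     (\<chi> k. z $ k - poly p (z $ k) / (\<Prod>j\<in>UNIV - {k}. (z $ k - z $ j)))"

definition is_complex_norm :: "(complex ^ 'n \<Rightarrow> real) \<Rightarrow> bool" where
  "is_complex_norm N \<longleftrightarrow>
     (\<forall>x. 0 \<le> N x) \<and> (\<forall>x. N x = 0 \<longleftrightarrow> x = 0) \<and>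
     (\<forall>c x. N (c *s x) = cmod c * N x) \<and> (\<forall>x y. N (x + y) \<le> N x + N y)"

end

theory Submission
  imports Defs
begin

text \<open>
  Every \<open>z \<in> H\<close> can be written as \<open>(u\<omega> + v\<omega>\<^sup>2, u\<omega>\<^sup>2 + v\<omega>, u + v)\<close> with \<open>\<omega>\<close> a primitive cube
  root of unity, and \<open>z\<close> is a complex multiple of a real vector exactly when \<open>|u| = |v|\<close>.
  In these coordinates the Weierstrass map of \<open>Z\<^sup>3\<close> is diagonal:
  \<open>(u, v) \<mapsto> (F u v, F v u)\<close> with \<open>F u v = u (2u\<^sup>3 - v\<^sup>3) / (3 (u\<^sup>3 - v\<^sup>3))\<close>.
  If \<open>|v| < |u|\<close>, the ratio \<open>s = v / u\<close> evolves by \<open>s \<mapsto> s (1 - 2s\<^sup>3) / (2 - s\<^sup>3)\<close>,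
  which shrinks \<open>|s|\<^sup>2\<close> at least by the factor \<open>(2 + |s\<^sub>0|\<^sup>2) / 3 < 1\<close>, while \<open>u\<close> is multiplied
  by \<open>(2 - s\<^sup>3) / (3 (1 - s\<^sup>3)) \<longrightarrow> 2/3\<close>. Hence \<open>s \<longrightarrow> 0\<close>, the iterates are asymptotically
  \<open>u\<^sub>n\<close> times a fixed nonzero vector, and their norms decay with ratio \<open>2/3\<close>.
\<close>

definition \<omega> :: complex where
  "\<omega> = Complex (-1/2) (sqrt 3 / 2)"

lemma omega_sq_add_omega: "\<omega>^2 + \<omega> + 1 = 0"
  by (simp add: \<omega>_def complex_eq_iff power2_eq_square)

lemma omega_cube: "\<omega>^3 = 1"
proof -
  have "\<omega>^3 - 1 = (\<omega> - 1) * (\<omega>^2 + \<omega> + 1)" by algebra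
  then show ?thesis using omega_sq_add_omega by simp
qed

lemma omega_sq_cube: "(\<omega>^2)^3 = 1"
  using omega_cube by algebra

lemma cnj_omega: "cnj \<omega> = \<omega>^2"
  by (simp add: \<omega>_def complex_eq_iff power2_eq_square)

definition fourier_vec :: "complex \<Rightarrow> complex \<Rightarrow> complex^3" where
  "fourier_vec u v = vector [u * \<omega> + v * \<omega>^2, u * \<omega>^2 + v * \<omega>, u + v]"

lemma fourier_vec_nth [simp]:
  "fourier_vec u v $ 1 = u * \<omega> + v * \<omega>^2"
  "fourier_vec u v $ 2 = u * \<omega>^2 + v * \<omega>"
  "fourier_vec u v $ 3 = u + v"
  by (simp_all add: fourier_vec_def)

lemma fourier_vec_eq_lincomb: "fourier_vec u v = u *s fourier_vec 1 0 + v *s fourier_vec 0 1"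
  by (simp add: vec_eq_iff forall_3 algebra_simps)

lemma fourier_vec_scale: "fourier_vec (c * u) (c * v) = c *s fourier_vec u v"
  by (simp add: vec_eq_iff forall_3 algebra_simps)

lemma fourier_vec_surj:
  fixes z :: "complex^3"
  assumes "z $ 1 + z $ 2 + z $ 3 = 0"
  shows "\<exists>u v. z = fourier_vec u v"
proof -
  have z3: "z $ 3 = - z $ 1 - z $ 2" using assms by (simp add: eq_neg_iff_add_eq_0 algebra_simps)
  have "z = fourier_vec ((z$1 * \<omega>^2 + z$2 * \<omega> + z$3) / 3) ((z$1 * \<omega> + z$2 * \<omega>^2 + z$3) / 3)"
    unfolding vec_eq_iff forall_3 fourier_vec_nth z3
    using omega_sq_add_omega omega_cube by (simp add: field_simps) algebra
  then show ?thesis by blast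
qed

lemma fourier_vec_cnj_real: "fourier_vec a (cnj a) = (\<chi> i. of_real (Re (fourier_vec a (cnj a) $ i)))"
proof -
  have "cnj (\<omega>^2) = \<omega>"
    using cnj_omega omega_cube by (simp add: power_mult_distrib) algebra
  then have "fourier_vec a (cnj a) $ i \<in> \<real>" for i
    using exhaust_3[of i] cnj_omega by (auto simp: Reals_cnj_iff)
  then show ?thesis by (simp add: vec_eq_iff)
qed

lemma fourier_vec_real_multiple:
  assumes "cmod u = cmod v"
  shows "\<exists>(c::complex) (x::real^3). fourier_vec u v = c *s (\<chi> i. of_real (x $ i))"
proof (cases "u = 0")
  case True
  then show ?thesis using assms by (intro exI[of _ 0]) (simp add: vec_eq_iff forall_3)
next
  case False
  have v0: "v \<noteq> 0" using assms False by (metis norm_eq_zero)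
  \<comment> \<open>\<open>v = c\<^sup>2 cnj u\<close> with \<open>|c| = 1\<close>, so that \<open>(u, v) = c (a, cnj a)\<close> for \<open>a = u / c\<close>\<close>
  define c where "c = csqrt (v / cnj u)"
  have cc: "c * c = v / cnj u" unfolding c_def by (metis power2_eq_square power2_csqrt)
  have "cmod (c * c) = 1" using assms v0 by (simp add: cc norm_divide)
  then have "c * cnj c = 1" by (simp add: complex_norm_square[symmetric] norm_mult power2_eq_square)
  then have "cnj c = 1 / c" by (auto simp: eq_divide_eq mult.commute)
  then have "c * (u / c) = u" "c * cnj (u / c) = v"
    using False v0 cc by (auto simp: complex_cnj_divide field_simps)
  then have "fourier_vec u v = c *s fourier_vec (u / c) (cnj (u / c))"
    by (metis fourier_vec_scale)
  also have "\<dots> = c *s (\<chi> i. of_real ((\<chi> i. Re (fourier_vec (u / c) (cnj (u / c)) $ i)) $ i))"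
    by (subst fourier_vec_cnj_real) simp
  finally show ?thesis by blast
qed

lemma fourier_vec_discriminant:
  "((fourier_vec u v $ 1 - fourier_vec u v $ 2) * (fourier_vec u v $ 1 - fourier_vec u v $ 3)
      * (fourier_vec u v $ 2 - fourier_vec u v $ 3))^2 = -27 * (u^3 - v^3)^2"
  unfolding fourier_vec_nth using omega_sq_add_omega by algebra

lemma fourier_vec_notin_diag_set:
  assumes "u^3 \<noteq> v^3"
  shows "fourier_vec u v \<notin> diag_set"
proof
  assume "fourier_vec u v \<in> diag_set"
  then obtain j k where "j \<noteq> k" "fourier_vec u v $ j = fourier_vec u v $ k"
    unfolding diag_set_def by blast
  then have "((fourier_vec u v $ 1 - fourier_vec u v $ 2) * (fourier_vec u v $ 1 - fourier_vec u v $ 3)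
      * (fourier_vec u v $ 2 - fourier_vec u v $ 3))^2 = 0"
    using exhaust_3[of j] exhaust_3[of k] by auto
  then have "-27 * (u^3 - v^3)^2 = 0" by (simp only: fourier_vec_discriminant)
  then show False using assms by simp
qed

definition fourier_step :: "complex \<Rightarrow> complex \<Rightarrow> complex" where
  "fourier_step u v = u * (2 * u^3 - v^3) / (3 * (u^3 - v^3))"

lemma fourier_step_rotate:
  assumes "c^3 = 1" "d^3 = 1"
  shows "fourier_step (u * c) (v * d) = fourier_step u v * c"
  using assms by (simp add: fourier_step_def power_mult_distrib)

lemma fourier_step_swap:
  assumes "u^3 \<noteq> v^3"
  shows "fourier_step v u = v * (u^3 - 2 * v^3) / (3 * (u^3 - v^3))"
  using assms unfolding fourier_step_def by (simp add: frac_eq_eq algebra_simps)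

lemma cubic_newton_identity:
  assumes "a^3 \<noteq> b^3"
  shows "(a + b) - (a + b)^3 / ((a + b - (a * \<omega> + b * \<omega>^2)) * (a + b - (a * \<omega>^2 + b * \<omega>)))
    = fourier_step a b + fourier_step b a"
proof -
  define D where "D = a^2 + a * b + b^2"
  have factor: "a^3 - b^3 = (a - b) * D" unfolding D_def by algebra
  have denom: "(a + b - (a * \<omega> + b * \<omega>^2)) * (a + b - (a * \<omega>^2 + b * \<omega>)) = 3 * D"
    unfolding D_def using omega_sq_add_omega by algebra
  have nz: "a - b \<noteq> 0" "D \<noteq> 0" "a^3 - b^3 \<noteq> 0"
    using assms factor by auto
  have "fourier_step a b + fourier_step b a = (a * (2 * a^3 - b^3) + b * (a^3 - 2 * b^3)) / (3 * (a^3 - b^3))"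
    unfolding fourier_step_swap[OF assms] by (simp add: fourier_step_def add_divide_distrib)
  moreover have "(a + b)^3 / (3 * D) = (a + b)^3 * (a - b) / (3 * (a^3 - b^3))"
    using nz by (simp add: factor)
  ultimately show ?thesis
    unfolding denom using nz by (simp add: field_simps) algebra
qed

lemma poly_cube: "poly [:0, 0, 0, 1:] x = x^3"
  by (simp add: eval_nat_numeral)

lemma weierstrass_map_cube_fourier_vec:
  assumes "u^3 \<noteq> v^3"
  shows "weierstrass_map [:0, 0, 0, 1:] (fourier_vec u v) = fourier_vec (fourier_step u v) (fourier_step v u)"
proof -
  define z where "z = fourier_vec u v"
  \<comment> \<open>coordinate \<open>k\<close> is the identity at \<open>(u\<omega>\<^sup>k, v\<omega>\<^sup>-\<^sup>k)\<close>, whose \<open>F\<close>-values are rotated by the same roots of unity\<close>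
  have newton: "x - x^3 / ((x - y) * (x - y')) = fourier_step a b + fourier_step b a"
    if "x = a + b" "y = a * \<omega> + b * \<omega>^2" "y' = a * \<omega>^2 + b * \<omega>" "a^3 \<noteq> b^3" for x y y' a b
    using cubic_newton_identity[of a b] that by simp
  have cubes: "(u * \<omega>)^3 \<noteq> (v * \<omega>^2)^3" "(u * \<omega>^2)^3 \<noteq> (v * \<omega>)^3"
    using assms omega_sq_cube by (simp_all add: power_mult_distrib omega_cube)
  have rotate:
    "fourier_step (u * \<omega>) (v * \<omega>^2) = fourier_step u v * \<omega>"
    "fourier_step (v * \<omega>^2) (u * \<omega>) = fourier_step v u * \<omega>^2"
    "fourier_step (u * \<omega>^2) (v * \<omega>) = fourier_step u v * \<omega>^2"
    "fourier_step (v * \<omega>) (u * \<omega>^2) = fourier_step v u * \<omega>"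
    by (simp_all only: fourier_step_rotate[OF omega_cube omega_sq_cube]
        fourier_step_rotate[OF omega_sq_cube omega_cube])
  have "z$1 - (z$1)^3 / ((z$1 - z$2) * (z$1 - z$3))
      = fourier_step u v * \<omega> + fourier_step v u * \<omega>^2"
    unfolding rotate(1,2)[symmetric] by (rule newton[OF _ _ _ cubes(1)]) (simp_all add: z_def; use omega_cube in algebra)+
  moreover have "z$2 - (z$2)^3 / ((z$2 - z$3) * (z$2 - z$1))
      = fourier_step u v * \<omega>^2 + fourier_step v u * \<omega>"
    unfolding rotate(3,4)[symmetric] by (rule newton[OF _ _ _ cubes(2)]) (simp_all add: z_def; use omega_cube in algebra)+
  moreover have "z$3 - (z$3)^3 / ((z$3 - z$1) * (z$3 - z$2))
      = fourier_step u v + fourier_step v u"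
    by (rule newton[OF _ _ _ assms]) (simp_all add: z_def; use omega_cube in algebra)+
  moreover have "UNIV - {1::3} = {2, 3}" "UNIV - {2::3} = {1, 3}" "UNIV - {3::3} = {1, 2}"
    using exhaust_3 by fastforce+
  ultimately show ?thesis
    unfolding z_def weierstrass_map_def vec_eq_iff forall_3 poly_cube
    by (simp add: ac_simps)
qed

definition step_factor :: "complex \<Rightarrow> complex" where
  "step_factor s = (2 - s^3) / (3 * (1 - s^3))"

definition ratio_step :: "complex \<Rightarrow> complex" where
  "ratio_step s = s * (1 - 2 * s^3) / (2 - s^3)"

lemma one_minus_step_factor: "s^3 \<noteq> 1 \<Longrightarrow> 1 - step_factor s = (1 - 2 * s^3) / (3 * (1 - s^3))"
  by (simp add: step_factor_def field_simps)

lemma step_factor_div: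
  assumes "b \<noteq> 0" shows "step_factor (a / b) = (2 * b^3 - a^3) / (3 * (b^3 - a^3))"
proof -
  have "step_factor (a / b) = ((2 * b^3 - a^3) / b^3) / (3 * ((b^3 - a^3) / b^3))"
    using assms by (simp add: step_factor_def power_divide diff_divide_distrib)
  then show ?thesis using assms by simp
qed

lemma fourier_step_eq_step_factor:
  assumes "u \<noteq> 0" "u^3 \<noteq> v^3"
  shows "fourier_step u v = u * step_factor (v / u)"
    and "fourier_step v u = v * (1 - step_factor (v / u))"
  using assms by (simp_all add: fourier_step_def step_factor_div fourier_step_swap field_simps)

lemma norm_cube_lt_one: "cmod s < 1 \<Longrightarrow> cmod (s^3) < 1"
  by (simp add: norm_power power_less_one_iff)

lemma step_factor_nonzero: "cmod s < 1 \<Longrightarrow> step_factor s \<noteq> 0"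
  using norm_cube_lt_one[of s] by (auto simp: step_factor_def)

lemma step_factor_ratio:
  assumes "cmod s < 1"
  shows "s * (1 - step_factor s) / step_factor s = ratio_step s"
proof -
  have "s^3 \<noteq> 1" "2 - s^3 \<noteq> 0"
    using norm_cube_lt_one[OF assms] by auto
  then show ?thesis
    unfolding one_minus_step_factor[OF \<open>s^3 \<noteq> 1\<close>] by (simp add: step_factor_def ratio_step_def)
qed

lemma norm_one_sub_double_sq_le:
  assumes "cmod t < 1"
  shows "cmod (1 - 2 * t)^2 \<le> (2 + cmod t^2) / 3 * cmod (2 - t)^2"
proof -
  have "cmod (2 - t) \<le> 3" using norm_triangle_ineq4[of 2 t] assms by simp
  then have D9: "cmod (2 - t)^2 \<le> 9" using power_mono[of "cmod (2 - t)" 3 2] by simp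
  have x1: "cmod t^2 \<le> 1" using assms by (simp add: power_le_one)
  have "cmod (1 - 2 * t)^2 = cmod (2 - t)^2 + 3 * (cmod t^2 - 1)"
    unfolding cmod_power2 by (simp add: power2_eq_square algebra_simps)
  \<comment> \<open>the difference of the two sides is \<open>(1 - |t|^2) (9 - |2 - t|^2) / 3\<close>\<close>
  also have "\<dots> \<le> (2 + cmod t^2) / 3 * cmod (2 - t)^2"
    using mult_nonneg_nonneg[of "1 - cmod t^2" "9 - cmod (2 - t)^2"] D9 x1 by (simp add: field_simps)
  finally show ?thesis .
qed

lemma norm_ratio_step_sq_le:
  assumes "cmod s \<le> \<rho>" "\<rho> < 1"
  shows "cmod (ratio_step s)^2 \<le> (2 + \<rho>^2) / 3 * cmod s^2"
proof -
  have s1: "cmod s < 1" using assms by simp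
  have "cmod (s^3) \<le> cmod s"
    using power_decreasing[of 1 3 "cmod s"] s1 by (simp add: norm_power)
  then have t: "cmod (s^3) < 1" "cmod (s^3)^2 \<le> \<rho>^2"
    using assms s1 by (auto intro: power_mono)
  then have "2 - s^3 \<noteq> 0" by auto
  have "cmod (ratio_step s)^2 = cmod s^2 * cmod (1 - 2 * s^3)^2 / cmod (2 - s^3)^2"
    by (simp add: ratio_step_def norm_mult norm_divide power_mult_distrib power_divide)
  also have "\<dots> \<le> cmod s^2 * ((2 + cmod (s^3)^2) / 3 * cmod (2 - s^3)^2) / cmod (2 - s^3)^2"
    by (intro divide_right_mono mult_left_mono norm_one_sub_double_sq_le t) simp_all
  also have "\<dots> = (2 + cmod (s^3)^2) / 3 * cmod s^2"
    using \<open>2 - s^3 \<noteq> 0\<close> by simp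
  also have "\<dots> \<le> (2 + \<rho>^2) / 3 * cmod s^2"
    using t by (intro mult_right_mono divide_right_mono) simp_all
  finally show ?thesis .
qed

lemma norm_ratio_step_le:
  assumes "cmod s < 1"
  shows "cmod (ratio_step s) \<le> cmod s"
proof (rule power2_le_imp_le)
  have "cmod s^2 \<le> 1" using assms by (simp add: power_le_one)
  then have "(2 + cmod s^2) / 3 * cmod s^2 \<le> cmod s^2" by (intro mult_left_le_one_le) simp_all
  then show "cmod (ratio_step s)^2 \<le> cmod s^2"
    using norm_ratio_step_sq_le[OF order_refl assms] by linarith
qed simp

lemma is_complex_normD:
  assumes "is_complex_norm N"
  shows "N (c *s x) = cmod c * N x" "N (x + y) \<le> N x + N y" "N x = 0 \<longleftrightarrow> x = 0"
  using assms unfolding is_complex_norm_def by blast+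

lemma is_complex_norm_abs_diff_le:
  assumes "is_complex_norm N"
  shows "\<bar>N x - N y\<bar> \<le> N (x - y)"
proof -
  have "N (y - x) = N (x - y)"
    using is_complex_normD(1)[OF assms, of "-1" "x - y"] by (simp add: vec_eq_iff)
  then show ?thesis
    using is_complex_normD(2)[OF assms, of "x - y" y] is_complex_normD(2)[OF assms, of "y - x" x]
    by simp
qed

lemma is_complex_norm_tendsto_lincomb:
  assumes N: "is_complex_norm N" and a: "a \<longlonglongrightarrow> a0" and b: "b \<longlonglongrightarrow> b0"
  shows "(\<lambda>n. N (a n *s e + b n *s e')) \<longlonglongrightarrow> N (a0 *s e + b0 *s e')"
proof (rule LIM_zero_cancel, rule Lim_null_comparison[OF always_eventually])
  show "\<forall>n. norm (N (a n *s e + b n *s e') - N (a0 *s e + b0 *s e'))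
      \<le> cmod (a n - a0) * N e + cmod (b n - b0) * N e'"
  proof
    fix n
    have "(a n *s e + b n *s e') - (a0 *s e + b0 *s e') = (a n - a0) *s e + (b n - b0) *s e'"
      by (simp add: vec_eq_iff algebra_simps)
    then have "norm (N (a n *s e + b n *s e') - N (a0 *s e + b0 *s e'))
        \<le> N ((a n - a0) *s e + (b n - b0) *s e')"
      using is_complex_norm_abs_diff_le[OF N] by (metis real_norm_def)
    also have "\<dots> \<le> N ((a n - a0) *s e) + N ((b n - b0) *s e')"
      by (rule is_complex_normD(2)[OF N])
    also have "\<dots> = cmod (a n - a0) * N e + cmod (b n - b0) * N e'"
      by (simp only: is_complex_normD(1)[OF N])
    finally show "norm (N (a n *s e + b n *s e') - N (a0 *s e + b0 *s e'))
        \<le> cmod (a n - a0) * N e + cmod (b n - b0) * N e'" .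
  qed
  have "(\<lambda>n. cmod (a n - a0) * N e + cmod (b n - b0) * N e') \<longlonglongrightarrow> cmod (a0 - a0) * N e + cmod (b0 - b0) * N e'"
    by (intro tendsto_intros a b)
  then show "(\<lambda>n. cmod (a n - a0) * N e + cmod (b n - b0) * N e') \<longlonglongrightarrow> 0" by simp
qed

locale dominant_fourier_orbit =
  fixes U V :: "nat \<Rightarrow> complex"
  assumes U_Suc: "\<And>n. U (Suc n) = fourier_step (U n) (V n)"
    and V_Suc: "\<And>n. V (Suc n) = fourier_step (V n) (U n)"
    and dominant_0: "cmod (V 0) < cmod (U 0)"
begin

lemma norm_ratio_0_lt_one: "cmod (V 0 / U 0) < 1"
  using dominant_0 by (simp add: norm_divide divide_less_eq)

lemma orbit_step:
  assumes U: "U n \<noteq> 0" and s: "cmod (V n / U n) < 1"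
  shows "U (Suc n) = U n * step_factor (V n / U n)"
    and "V (Suc n) = V n * (1 - step_factor (V n / U n))"
    and "V (Suc n) / U (Suc n) = ratio_step (V n / U n)"
proof -
  have "(V n / U n)^3 \<noteq> 1" using norm_cube_lt_one[OF s] by auto
  then have "U n ^ 3 \<noteq> V n ^ 3" using U by (auto simp: power_divide)
  then show U': "U (Suc n) = U n * step_factor (V n / U n)"
    and V': "V (Suc n) = V n * (1 - step_factor (V n / U n))"
    using U unfolding U_Suc V_Suc by (simp_all add: fourier_step_eq_step_factor)
  show "V (Suc n) / U (Suc n) = ratio_step (V n / U n)"
    unfolding U' V' step_factor_ratio[OF s, symmetric] using U step_factor_nonzero[OF s] by simp
qed

lemma orbit_invariant: "U n \<noteq> 0 \<and> cmod (V n / U n) \<le> cmod (V 0 / U 0)"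
proof (induction n)
  case 0
  then show ?case using dominant_0 by auto
next
  case (Suc n)
  then have U: "U n \<noteq> 0" and s: "cmod (V n / U n) < 1"
    using norm_ratio_0_lt_one by auto
  then show ?case
    using orbit_step[OF U s] step_factor_nonzero[OF s] norm_ratio_step_le[OF s] Suc by auto
qed

lemma U_nonzero: "U n \<noteq> 0"
  using orbit_invariant by blast

lemma norm_ratio_lt_one: "cmod (V n / U n) < 1"
  using orbit_invariant[of n] norm_ratio_0_lt_one by linarith

lemmas U_Suc_eq = orbit_step(1)[OF U_nonzero norm_ratio_lt_one]
   and V_Suc_eq = orbit_step(2)[OF U_nonzero norm_ratio_lt_one]
   and ratio_Suc = orbit_step(3)[OF U_nonzero norm_ratio_lt_one]

lemma norm_ratio_sq_le:
  "cmod (V n / U n)^2 \<le> ((2 + cmod (V 0 / U 0)^2) / 3)^n * cmod (V 0 / U 0)^2"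
proof (induction n)
  case (Suc n)
  have "cmod (V (Suc n) / U (Suc n))^2 \<le> (2 + cmod (V 0 / U 0)^2) / 3 * cmod (V n / U n)^2"
    unfolding ratio_Suc using orbit_invariant norm_ratio_0_lt_one by (intro norm_ratio_step_sq_le) auto
  also have "\<dots> \<le> ((2 + cmod (V 0 / U 0)^2) / 3)^Suc n * cmod (V 0 / U 0)^2"
    using mult_left_mono[OF Suc.IH, of "(2 + cmod (V 0 / U 0)^2) / 3"] by (simp add: ac_simps)
  finally show ?case .
qed simp

lemma ratio_tendsto_0: "(\<lambda>n. V n / U n) \<longlonglongrightarrow> 0"
proof -
  define \<rho> where "\<rho> = cmod (V 0 / U 0)"
  define q where "q = (2 + \<rho>^2) / 3"
  have "\<rho>^2 < 1" using norm_ratio_0_lt_one by (simp add: \<rho>_def power_less_one_iff)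
  then have q: "0 \<le> q" "q < 1" by (simp_all add: q_def)
  have "cmod (V n / U n) \<le> sqrt (q^n * \<rho>^2)" for n
    using norm_ratio_sq_le[of n] by (intro real_le_rsqrt) (simp add: q_def \<rho>_def)
  also have "sqrt (q^n * \<rho>^2) = sqrt q ^ n * \<rho>" for n
    by (simp add: \<rho>_def real_sqrt_mult real_sqrt_power)
  finally have "\<forall>n. norm (V n / U n) \<le> sqrt q ^ n * \<rho>" by simp
  moreover have "(\<lambda>n. sqrt q ^ n * \<rho>) \<longlonglongrightarrow> 0"
    using q by (intro tendsto_mult_left_zero LIMSEQ_power_zero) simp
  ultimately show ?thesis by (rule Lim_null_comparison[OF always_eventually])
qed

lemma step_factor_tendsto: "(\<lambda>n. step_factor (V n / U n)) \<longlonglongrightarrow> 2 / 3"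
proof -
  have "(\<lambda>n. (2 - (V n / U n)^3) / (3 * (1 - (V n / U n)^3))) \<longlonglongrightarrow> (2 - 0^3) / (3 * (1 - 0^3))"
    by (intro tendsto_intros ratio_tendsto_0) simp
  then show ?thesis by (simp add: step_factor_def)
qed

lemma U_tendsto_0: "U \<longlonglongrightarrow> 0"
proof -
  have "\<forall>\<^sub>F n in sequentially. cmod (step_factor (V n / U n)) < 5 / 6"
    using tendsto_norm[OF step_factor_tendsto] by (rule order_tendstoD) simp
  then obtain M where M: "\<And>n. n \<ge> M \<Longrightarrow> cmod (step_factor (V n / U n)) < 5 / 6"
    unfolding eventually_sequentially by blast
  have "summable U"
  proof (rule summable_ratio_test[of "5 / 6" M])
    fix n assume "n \<ge> M"
    then show "norm (U (Suc n)) \<le> 5 / 6 * norm (U n)"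
      using mult_left_mono[OF less_imp_le[OF M[of n]], of "cmod (U n)"]
      unfolding U_Suc_eq by (simp add: norm_mult mult.commute)
  qed simp
  then show ?thesis by (rule summable_LIMSEQ_zero)
qed

lemma V_tendsto_0: "V \<longlonglongrightarrow> 0"
proof -
  have "(\<lambda>n. V n / U n * U n) \<longlonglongrightarrow> 0 * 0"
    by (rule tendsto_mult[OF ratio_tendsto_0 U_tendsto_0])
  then show ?thesis using U_nonzero by simp
qed

lemma norm_V_less_U: "cmod (V n) < cmod (U n)"
  using norm_ratio_lt_one[of n] U_nonzero[of n] by (simp add: norm_divide)

lemma norm_quotient_tendsto:
  assumes N: "is_complex_norm N" and e: "e \<noteq> 0"
  shows "(\<lambda>n. N (U (Suc n) *s e + V (Suc n) *s e') / N (U n *s e + V n *s e')) \<longlonglongrightarrow> 2 / 3"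
proof -
  define s where "s n = V n / U n" for n
  define g where "g n = step_factor (s n)" for n
  have eq: "N (U (Suc n) *s e + V (Suc n) *s e') / N (U n *s e + V n *s e')
     = N (g n *s e + (s n * (1 - g n)) *s e') / N (1 *s e + s n *s e')" for n
  proof -
    have "U (Suc n) *s e + V (Suc n) *s e' = U n *s (g n *s e + (s n * (1 - g n)) *s e')"
      "U n *s e + V n *s e' = U n *s (1 *s e + s n *s e')"
      unfolding U_Suc_eq V_Suc_eq g_def s_def using U_nonzero[of n] by (simp_all add: vec_eq_iff algebra_simps)
    then show ?thesis
      using U_nonzero[of n] by (simp only: is_complex_normD(1)[OF N]) simp
  qed
  have lim: "(\<lambda>n. N (g n *s e + (s n * (1 - g n)) *s e') / N (1 *s e + s n *s e'))
      \<longlonglongrightarrow> N ((2 / 3) *s e + (0 * (1 - 2 / 3)) *s e') / N (1 *s e + 0 *s e')"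
    using ratio_tendsto_0 step_factor_tendsto e is_complex_normD(3)[OF N]
    unfolding g_def s_def
    by (intro tendsto_divide is_complex_norm_tendsto_lincomb[OF N] tendsto_intros) (auto simp: vec_eq_iff)
  have val: "N ((2 / 3) *s e + (0 * (1 - 2 / 3)) *s e') / N (1 *s e + 0 *s e') = 2 / 3"
    using is_complex_normD(1)[OF N, of "2 / 3" e] is_complex_normD(3)[OF N, of e] e
    by (simp add: vec_eq_iff)
  show ?thesis unfolding eq using lim unfolding val .
qed

end

lemma fourier_orbit_exists:
  obtains U V :: "nat \<Rightarrow> complex"
  where "U 0 = u" "V 0 = v"
    "\<And>n. U (Suc n) = fourier_step (U n) (V n)" "\<And>n. V (Suc n) = fourier_step (V n) (U n)"
proof -
  define P where "P = rec_nat (u, v) (\<lambda>_ p. (fourier_step (fst p) (snd p), fourier_step (snd p) (fst p)))"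
  show ?thesis by (rule that[of "\<lambda>n. fst (P n)" "\<lambda>n. snd (P n)"]) (simp_all add: P_def)
qed

lemma fourier_orbit_asymptotics:
  fixes U V :: "nat \<Rightarrow> complex"
  assumes U_Suc: "\<And>n. U (Suc n) = fourier_step (U n) (V n)"
    and V_Suc: "\<And>n. V (Suc n) = fourier_step (V n) (U n)"
    and "cmod (U 0) \<noteq> cmod (V 0)"
  shows "(\<forall>n. cmod (U n) \<noteq> cmod (V n)) \<and> U \<longlonglongrightarrow> 0 \<and> V \<longlonglongrightarrow> 0 \<and>
    (\<forall>N. is_complex_norm N \<longrightarrow>
      (\<lambda>n. N (fourier_vec (U (Suc n)) (V (Suc n))) / N (fourier_vec (U n) (V n))) \<longlonglongrightarrow> 2 / 3)"
proof -
  have basis: "fourier_vec 1 0 \<noteq> 0" "fourier_vec 0 1 \<noteq> 0"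
    by (metis fourier_vec_nth(3) add_0 add.right_neutral zero_index zero_neq_one)+
  consider "cmod (V 0) < cmod (U 0)" | "cmod (U 0) < cmod (V 0)"
    using assms(3) by linarith
  then show ?thesis
  proof cases
    case 1
    interpret dominant_fourier_orbit U V by unfold_locales (use U_Suc V_Suc 1 in auto)
    show ?thesis
      using norm_V_less_U U_tendsto_0 V_tendsto_0 norm_quotient_tendsto[OF _ basis(1), of _ "fourier_vec 0 1"]
      by (simp add: fourier_vec_eq_lincomb[symmetric]) (metis less_irrefl)
  next
    case 2
    interpret dominant_fourier_orbit V U by unfold_locales (use U_Suc V_Suc 2 in auto)
    have swap: "b *s fourier_vec 0 1 + a *s fourier_vec 1 0 = fourier_vec a b" for a b
      by (simp add: fourier_vec_eq_lincomb[of a b] add.commute)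
    show ?thesis
      using norm_V_less_U U_tendsto_0 V_tendsto_0 norm_quotient_tendsto[OF _ basis(2), of _ "fourier_vec 1 0"]
      by (simp add: swap) (metis less_irrefl)
  qed
qed

lemma norm_neq_imp_cube_neq: "cmod u \<noteq> cmod v \<Longrightarrow> u^3 \<noteq> v^3"
  by (metis norm_power power_eq_imp_eq_base norm_ge_zero zero_less_numeral)

lemma weierstrass_map_cube_iterate:
  assumes "\<And>n. U (Suc n) = fourier_step (U n) (V n)" "\<And>n. V (Suc n) = fourier_step (V n) (U n)"
    and "\<And>n. U n ^ 3 \<noteq> V n ^ 3"
  shows "(weierstrass_map [:0, 0, 0, 1:] ^^ n) (fourier_vec (U 0) (V 0)) = fourier_vec (U n) (V n)"
  by (induction n) (simp_all add: assms weierstrass_map_cube_fourier_vec)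

lemma tendsto_fourier_vec:
  assumes "(f \<longlongrightarrow> a) F" "(g \<longlongrightarrow> b) F"
  shows "((\<lambda>x. fourier_vec (f x) (g x)) \<longlongrightarrow> fourier_vec a b) F"
proof (rule vec_tendstoI)
  fix i :: 3
  show "((\<lambda>x. fourier_vec (f x) (g x) $ i) \<longlongrightarrow> fourier_vec a b $ i) F"
    using exhaust_3[of i] by (auto intro!: tendsto_add tendsto_mult_right assms)
qed

lemma zero_in_diag_set: "(0 :: complex^3) \<in> diag_set"
  unfolding diag_set_def by (intro CollectI exI[of _ 1] exI[of _ 2]) simp

theorem theorem3p8:
  fixes z :: "complex ^ 3"
  assumes "z $ 1 + z $ 2 + z $ 3 = 0"
    and "\<not> (\<exists>(c::complex) (v::real ^ 3). z = c *s (\<chi> i. complex_of_real (v $ i)))"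
  shows "(\<forall>n. (weierstrass_map [:0, 0, 0, 1:] ^^ n) z \<notin> diag_set)
    \<and> ((\<lambda>n. (weierstrass_map [:0, 0, 0, 1:] ^^ n) z) \<longlonglongrightarrow> 0)
    \<and> (\<forall>n. (weierstrass_map [:0, 0, 0, 1:] ^^ n) z \<noteq> 0)
    \<and> (\<forall>N :: complex ^ 3 \<Rightarrow> real. is_complex_norm N \<longrightarrow>
         (\<lambda>n. N ((weierstrass_map [:0, 0, 0, 1:] ^^ Suc n) z)
              / N ((weierstrass_map [:0, 0, 0, 1:] ^^ n) z)) \<longlonglongrightarrow> 2 / 3)"
proof -
  obtain u v where z: "z = fourier_vec u v"
    using fourier_vec_surj[OF assms(1)] by blast
  have "cmod u \<noteq> cmod v"
    using fourier_vec_real_multiple assms(2) unfolding z by blast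
  obtain U V where UV: "U 0 = u" "V 0 = v"
    "\<And>n. U (Suc n) = fourier_step (U n) (V n)" "\<And>n. V (Suc n) = fourier_step (V n) (U n)"
    using fourier_orbit_exists[of u v] by blast
  then have asym: "(\<forall>n. cmod (U n) \<noteq> cmod (V n)) \<and> U \<longlonglongrightarrow> 0 \<and> V \<longlonglongrightarrow> 0 \<and>
    (\<forall>N. is_complex_norm N \<longrightarrow>
      (\<lambda>n. N (fourier_vec (U (Suc n)) (V (Suc n))) / N (fourier_vec (U n) (V n))) \<longlonglongrightarrow> 2 / 3)"
    using \<open>cmod u \<noteq> cmod v\<close> by (intro fourier_orbit_asymptotics) auto
  then have cubes: "U n ^ 3 \<noteq> V n ^ 3" for n
    by (simp add: norm_neq_imp_cube_neq)
  have orbit: "(weierstrass_map [:0, 0, 0, 1:] ^^ n) z = fourier_vec (U n) (V n)" for n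
    using weierstrass_map_cube_iterate[of U V, OF UV(3,4) cubes] UV(1,2) z by simp
  have "(\<lambda>n. fourier_vec (U n) (V n)) \<longlonglongrightarrow> fourier_vec 0 0"
    using asym by (intro tendsto_fourier_vec) auto
  then show ?thesis
    unfolding orbit using asym fourier_vec_notin_diag_set[OF cubes] zero_in_diag_set
    by (auto simp: fourier_vec_eq_lincomb[of 0 0]) metis
qed

end
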